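(* With $D$, $S$ and $A$ as in the context, the restriction map $\mathrm{Res}:\mathrm{Der}(D,A)\to\mathrm{Der}(\Phi(D),S)$, $\tau\mapsto\tau|_{\Phi(D)}$, is well defined and surjective.
   Context: $p$ is an odd prime, $d\geq 2$. $D=\langle y_1,\dots,y_d\rangle$ is a finite $p$-group of exponent $p$ and class $2$ with $|D/\Phi(D)|=p^d$ and $|\Phi(D)/\gamma_3(D)|=p^{\binom d2}$. $S=\langle a\rangle\cong\mathrm{F}_p$ is the trivial $D$-module; $\delta_j:D\to S$ is the homomorphism with $\delta_j(y_j)=a$, $\delta_j(y_i)=0$ ($i\ne j$). $A=S\oplus\bigoplus_{i=1}^d\langle r_i\rangle$, $\langle r_i\rangle\cong\mathrm{F}_p$, with action $(la+\sum_ik_ir_i)^g=la+\sum_ik_i(r_i-\delta_i(g))$. Since $\Phi(D)$ acts trivially on $S$, $\mathrm{Der}(\Phi(D),S)=\mathrm{Hom}(\Phi(D),S)$. *)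

theory Defs
  imports "HOL-Algebra.Algebra"
begin

definition maximal_subgroup :: "'a set \<Rightarrow> ('a, 'b) monoid_scheme \<Rightarrow> bool" where
  "maximal_subgroup H G \<longleftrightarrow> subgroup H G \<and> H \<noteq> carrier G \<and>
     (\<forall>K. subgroup K G \<and> H \<subseteq> K \<longrightarrow> K = H \<or> K = carrier G)"

definition frattini :: "('a, 'b) monoid_scheme \<Rightarrow> 'a set" where
  "frattini G = carrier G \<inter> \<Inter> {H. maximal_subgroup H G}"

definition gamma2 :: "('a, 'b) monoid_scheme \<Rightarrow> 'a set" where
  "gamma2 G = derived G (carrier G)"

definition gamma3 :: "('a, 'b) monoid_scheme \<Rightarrow> 'a set" where
  "gamma3 G = generate G (\<Union>x\<in>gamma2 G. \<Union>g\<in>carrier G.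
      {x \<otimes>\<^bsub>G\<^esub> g \<otimes>\<^bsub>G\<^esub> inv\<^bsub>G\<^esub> x \<otimes>\<^bsub>G\<^esub> inv\<^bsub>G\<^esub> g})"

(* The module A = S (+) <r_1> (+) ... (+) <r_d> over F_p.
   An element  l a + sum_i k_i r_i  is represented by the pair (l, k) with
   l in {0..<p}, k i in {0..<p} for i in {1..d}, and k i = 0 otherwise. *)
definition A_carrier :: "nat \<Rightarrow> nat \<Rightarrow> (int \<times> (nat \<Rightarrow> int)) set" where
  "A_carrier p d = {(l, k). l \<in> {0..<int p} \<and> (\<forall>i\<in>{1..d}. k i \<in> {0..<int p})
                            \<and> (\<forall>i. i \<notin> {1..d} \<longrightarrow> k i = 0)}"

definition S_carrier :: "nat \<Rightarrow> nat \<Rightarrow> (int \<times> (nat \<Rightarrow> int)) set" where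
  "S_carrier p d = {(l, k). l \<in> {0..<int p} \<and> (\<forall>i. k i = 0)}"

definition A_add :: "nat \<Rightarrow> nat \<Rightarrow> int \<times> (nat \<Rightarrow> int) \<Rightarrow> int \<times> (nat \<Rightarrow> int) \<Rightarrow> int \<times> (nat \<Rightarrow> int)" where
  "A_add p d u v = ((fst u + fst v) mod int p,
                    (\<lambda>i. if i \<in> {1..d} then (snd u i + snd v i) mod int p else 0))"

(* right action: (l a + sum_i k_i r_i)^g = l a + sum_i k_i (r_i - delta_i(g)),
   delta_i(g) being identified with its coefficient in F_p (delta_i g * a) *)
definition A_act :: "nat \<Rightarrow> nat \<Rightarrow> (nat \<Rightarrow> 'g \<Rightarrow> int) \<Rightarrow> int \<times> (nat \<Rightarrow> int) \<Rightarrow> 'g \<Rightarrow> int \<times> (nat \<Rightarrow> int)" where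
  "A_act p d \<delta> u g = ((fst u - (\<Sum>i\<in>{1..d}. snd u i * \<delta> i g)) mod int p, snd u)"

definition is_derivation ::
  "('g, 'b) monoid_scheme \<Rightarrow> 'g set \<Rightarrow> 'm set \<Rightarrow> ('m \<Rightarrow> 'm \<Rightarrow> 'm) \<Rightarrow> ('m \<Rightarrow> 'g \<Rightarrow> 'm) \<Rightarrow> ('g \<Rightarrow> 'm) \<Rightarrow> bool" where
  "is_derivation G H M addM act \<tau> \<longleftrightarrow>
     (\<forall>g\<in>H. \<tau> g \<in> M) \<and>
     (\<forall>g\<in>H. \<forall>h\<in>H. \<tau> (g \<otimes>\<^bsub>G\<^esub> h) = addM (act (\<tau> g) h) (\<tau> h))"

end

theory Submission
  imports Defs
begin

(* Every homomorphism D -> F_p vanishes on the Frattini subgroup: if it is nonzero, its kernel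
   is a maximal subgroup. The r_i-coordinates of a derivation D -> A are such homomorphisms, so a
   derivation maps Phi(D) into S, on which D acts trivially; this is the restriction.

   For surjectivity, the common kernel N of the delta_j contains gamma_2(D) and Phi(D). Every
   g in D is c y_1^(x_1) ... y_d^(x_d) with c in gamma_2(D) and x_j = delta_j(g); hence
   N = gamma_2(D), and |D : N| >= p^d = |D : Phi(D)| gives Phi(D) = N = gamma_2(D).
   Given phi : gamma_2(D) -> F_p, write g = c_g m(g) with m(g) the monomial above. Since
   gamma_2(D) is central and the commutator is bilinear, c_(gh) = c_g c_h c where
   phi(c) = sum_(k < j) delta_j(g) delta_k(h) phi([y_j, y_k]); so
   tau(g) = phi(c_g) a - sum_k (sum_(j > k) delta_j(g) phi([y_j, y_k])) r_k
   is a derivation D -> A extending phi. *)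

section \<open>Homomorphisms to Z/pZ and the Frattini subgroup\<close>

definition zmod_hom :: "('g, 'b) monoid_scheme \<Rightarrow> nat \<Rightarrow> 'g set \<Rightarrow> ('g \<Rightarrow> int) \<Rightarrow> bool" where
  "zmod_hom G p H f \<longleftrightarrow> (\<forall>g\<in>H. f g \<in> {0..<int p}) \<and>
      (\<forall>g\<in>H. \<forall>h\<in>H. f (g \<otimes>\<^bsub>G\<^esub> h) = (f g + f h) mod int p)"

lemma mod_double_eq_self_imp_zero:
  fixes a P :: int
  assumes "0 \<le> a" "a < P" "a = (a + a) mod P"
  shows "a = 0"
proof (cases "a + a < P")
  case True
  then show ?thesis using assms by simp
next
  case False
  have "(a + a) mod P = ((a + a - P) + P) mod P" by simp
  also have "\<dots> = (a + a - P) mod P" by (rule mod_add_self2)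
  also have "\<dots> = a + a - P"
    using False assms by (intro mod_pos_pos_trivial) linarith+
  finally show ?thesis using assms by linarith
qed

context group
begin

lemma zmod_hom_one:
  assumes f: "zmod_hom G p H f" and H: "subgroup H G"
  shows "f \<one> = 0"
proof -
  have one: "\<one> \<in> H" using subgroup.one_closed[OF H] .
  then have "f (\<one> \<otimes> \<one>) = (f \<one> + f \<one>) mod int p" and range: "f \<one> \<in> {0..<int p}"
    using f unfolding zmod_hom_def by blast+
  then have double: "f \<one> = (f \<one> + f \<one>) mod int p" by (simp only: l_one one_closed)
  show ?thesis using mod_double_eq_self_imp_zero[OF _ _ double] range by simp
qed

lemma zmod_hom_nat_pow:
  assumes f: "zmod_hom G p H f" and H: "subgroup H G" and g: "g \<in> H"
  shows "f (g [^] (n::nat)) = (int n * f g) mod int p"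
proof (induction n)
  case 0
  then show ?case using zmod_hom_one[OF f H] by simp
next
  case (Suc n)
  have "g [^] n \<in> H"
    using subgroup_int_pow_closed[OF H g, of "int n"] by (simp only: int_pow_int)
  then have "f (g [^] Suc n) = (f (g [^] n) + f g) mod int p"
    using f g unfolding zmod_hom_def by simp
  also have "\<dots> = ((int n * f g) mod int p + f g) mod int p"
    using Suc by simp
  also have "\<dots> = (int n * f g + f g) mod int p"
    by (rule mod_add_left_eq)
  also have "\<dots> = (int (Suc n) * f g) mod int p"
    by (simp add: distrib_right add.commute)
  finally show ?case .
qed

lemma zmod_hom_inv:
  assumes f: "zmod_hom G p H f" and H: "subgroup H G" and g: "g \<in> H"
  shows "f (inv g) = (- f g) mod int p"
proof -
  have ig: "inv g \<in> H" using subgroup.m_inv_closed[OF H g] .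
  have "0 = f (g \<otimes> inv g)"
    using zmod_hom_one[OF f H] subgroup.mem_carrier[OF H g] by simp
  also have "\<dots> = (f g + f (inv g)) mod int p"
    using f g ig unfolding zmod_hom_def by blast
  finally have sum0: "(f g + f (inv g)) mod int p = 0" by simp
  have "f (inv g) \<in> {0..<int p}" using f ig unfolding zmod_hom_def by blast
  then have "f (inv g) = ((f g + f (inv g)) - f g) mod int p" by simp
  also have "\<dots> = ((f g + f (inv g)) mod int p - f g) mod int p"
    by (rule mod_diff_left_eq[symmetric])
  also have "\<dots> = (- f g) mod int p" using sum0 by simp
  finally show ?thesis .
qed

lemma zmod_hom_kernel_subgroup:
  assumes f: "zmod_hom G p (carrier G) f"
  shows "subgroup {g \<in> carrier G. f g = 0} G"
proof (rule subgroupI)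
  show "{g \<in> carrier G. f g = 0} \<noteq> {}"
    using zmod_hom_one[OF f subgroup_self] by auto
  fix a b assume a: "a \<in> {g \<in> carrier G. f g = 0}" and b: "b \<in> {g \<in> carrier G. f g = 0}"
  show "inv a \<in> {g \<in> carrier G. f g = 0}"
    using a zmod_hom_inv[OF f subgroup_self, of a] by auto
  show "a \<otimes> b \<in> {g \<in> carrier G. f g = 0}"
    using a b f unfolding zmod_hom_def by auto
qed auto

lemma zmod_hom_nat_pow_attains:
  assumes pr: "Factorial_Ring.prime p" and f: "zmod_hom G p (carrier G) f"
    and h: "h \<in> carrier G" "f h \<noteq> 0" and g: "g \<in> carrier G"
  shows "\<exists>n. f (h [^] (n::nat)) = f g"
proof -
  have "0 < f h" "f h < int p" using h f unfolding zmod_hom_def by auto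
  then have "\<not> int p dvd f h" using zdvd_imp_le by fastforce
  then have "coprime (int p) (f h)" using pr by (simp add: prime_imp_coprime)
  then obtain u v where uv: "u * f h + v * int p = 1"
    using bezout_int[of "f h" "int p"] by (metis coprime_commute coprime_iff_gcd_eq_1)
  have p0: "int p > 0" using pr prime_gt_0_nat by simp
  define n where "n = nat ((u * f g) mod int p)"
  have "int n = (u * f g) mod int p" using p0 by (simp add: n_def)
  then have "f (h [^] n) = ((u * f g) mod int p * f h) mod int p"
    using zmod_hom_nat_pow[OF f subgroup_self h(1)] by simp
  also have "\<dots> = (u * f g * f h) mod int p"
    by (simp add: mod_mult_left_eq)
  also have "\<dots> = (f g * (u * f h)) mod int p"
    by (simp add: ac_simps)
  also have "\<dots> = (f g + (- f g * v) * int p) mod int p"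
  proof -
    have "u * f h = 1 - v * int p" using uv by (simp add: eq_diff_eq)
    then have "f g * (u * f h) = f g * (1 - v * int p)" by simp
    also have "\<dots> = f g + (- f g * v) * int p" by (simp add: algebra_simps)
    finally have "f g * (u * f h) = f g + (- f g * v) * int p" .
    then show ?thesis by simp
  qed
  also have "\<dots> = f g mod int p" by (rule mod_mult_self1)
  also have "\<dots> = f g" using f g unfolding zmod_hom_def by simp
  finally show ?thesis by blast
qed

lemma zmod_hom_kernel_maximal:
  assumes pr: "Factorial_Ring.prime p" and f: "zmod_hom G p (carrier G) f"
    and g0: "g0 \<in> carrier G" "f g0 \<noteq> 0"
  shows "maximal_subgroup {g \<in> carrier G. f g = 0} G"
proof -
  let ?N = "{g \<in> carrier G. f g = 0}"
  have "K = carrier G" if K: "subgroup K G" "?N \<subseteq> K" "\<not> K \<subseteq> ?N" for K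
  proof -
    obtain h where h: "h \<in> K" "f h \<noteq> 0" using K subgroup.subset by blast
    have hc: "h \<in> carrier G" using subgroup.mem_carrier[OF K(1) h(1)] .
    have "g \<in> K" if g: "g \<in> carrier G" for g
    proof -
      obtain n where n: "f (h [^] (n::nat)) = f g"
        using zmod_hom_nat_pow_attains[OF pr f hc h(2) g] by blast
      have hn: "h [^] n \<in> K" "h [^] n \<in> carrier G"
        using subgroup_int_pow_closed[OF K(1) h(1), of "int n"] hc by (simp_all add: int_pow_int)
      have "f (inv (h [^] n) \<otimes> g) = ((- f g) mod int p + f g) mod int p"
        using f g hn(2) zmod_hom_inv[OF f subgroup_self hn(2)] n unfolding zmod_hom_def by simp
      also have "\<dots> = 0" by (simp add: mod_add_left_eq)
      finally have "inv (h [^] n) \<otimes> g \<in> K" using K(2) g hn(2) by auto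
      then have "h [^] n \<otimes> (inv (h [^] n) \<otimes> g) \<in> K" using subgroup.m_closed[OF K(1) hn(1)] by blast
      then show "g \<in> K" using hn(2) g by (simp add: m_assoc[symmetric])
    qed
    then show ?thesis using subgroup.subset[OF K(1)] by blast
  qed
  moreover have "?N \<noteq> carrier G" using g0 by auto
  ultimately show ?thesis
    unfolding maximal_subgroup_def using zmod_hom_kernel_subgroup[OF f] by blast
qed

lemma zmod_hom_vanishes_on_frattini:
  assumes pr: "Factorial_Ring.prime p" and f: "zmod_hom G p (carrier G) f"
    and g: "g \<in> frattini G"
  shows "f g = 0"
proof (cases "\<exists>g0\<in>carrier G. f g0 \<noteq> 0")
  case True
  then obtain g0 where "g0 \<in> carrier G" "f g0 \<noteq> 0" by blast
  from zmod_hom_kernel_maximal[OF pr f this] g show ?thesis unfolding frattini_def by blast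
next
  case False
  then show ?thesis using g unfolding frattini_def by blast
qed

lemma frattini_subgroup: "subgroup (frattini G) G"
proof -
  have "subgroup (\<Inter> (insert (carrier G) {H. maximal_subgroup H G})) G"
    by (rule subgroups_Inter) (auto intro: subgroup_self simp: maximal_subgroup_def)
  then show ?thesis by (simp add: frattini_def)
qed

section \<open>Restricting derivations to the Frattini subgroup\<close>

lemma derivation_coordinate_zmod_hom:
  assumes \<tau>: "is_derivation G (carrier G) (A_carrier p d) (A_add p d) (A_act p d \<delta>) \<tau>"
    and i: "i \<in> {1..d}"
  shows "zmod_hom G p (carrier G) (\<lambda>g. snd (\<tau> g) i)"
  unfolding zmod_hom_def
proof (intro conjI ballI)
  fix g h assume g: "g \<in> carrier G" and h: "h \<in> carrier G"
  show "snd (\<tau> g) i \<in> {0..<int p}"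
    using \<tau> g i unfolding is_derivation_def A_carrier_def by auto
  show "snd (\<tau> (g \<otimes> h)) i = (snd (\<tau> g) i + snd (\<tau> h) i) mod int p"
    using \<tau> g h i unfolding is_derivation_def A_add_def A_act_def by simp
qed

lemma derivation_restrict_frattini:
  assumes pr: "Factorial_Ring.prime p"
    and \<tau>: "is_derivation G (carrier G) (A_carrier p d) (A_add p d) (A_act p d \<delta>) \<tau>"
  shows "is_derivation G (frattini G) (S_carrier p d) (A_add p d) (\<lambda>u g. u) \<tau>"
proof -
  have Phi: "frattini G \<subseteq> carrier G" using subgroup.subset[OF frattini_subgroup] .
  have in_S: "\<tau> g \<in> S_carrier p d" and fixed: "A_act p d \<delta> (\<tau> g) h = \<tau> g"
    if g: "g \<in> frattini G" for g h
  proof -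
    have in_A: "\<tau> g \<in> A_carrier p d" using \<tau> g Phi unfolding is_derivation_def by blast
    have "snd (\<tau> g) i = 0" for i
    proof (cases "i \<in> {1..d}")
      case True
      show ?thesis
        using zmod_hom_vanishes_on_frattini[OF pr derivation_coordinate_zmod_hom[OF \<tau> True] g] .
    next
      case False
      then show ?thesis using in_A unfolding A_carrier_def by (cases "\<tau> g") auto
    qed
    moreover have "fst (\<tau> g) \<in> {0..<int p}"
      using in_A unfolding A_carrier_def by (cases "\<tau> g") auto
    ultimately show "\<tau> g \<in> S_carrier p d" "A_act p d \<delta> (\<tau> g) h = \<tau> g"
      unfolding S_carrier_def A_act_def by (cases "\<tau> g"; auto)+
  qed
  show ?thesis
    using in_S fixed \<tau> Phi subgroup.m_closed[OF frattini_subgroup]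
    unfolding is_derivation_def by (metis subsetD)
qed

end

section \<open>Commutators in groups of class two\<close>

definition commutator :: "('g, 'b) monoid_scheme \<Rightarrow> 'g \<Rightarrow> 'g \<Rightarrow> 'g" where
  "commutator G a b = a \<otimes>\<^bsub>G\<^esub> b \<otimes>\<^bsub>G\<^esub> inv\<^bsub>G\<^esub> a \<otimes>\<^bsub>G\<^esub> inv\<^bsub>G\<^esub> b"

context group
begin

lemma inv_mult_cancel_left [simp]:
  "x \<in> carrier G \<Longrightarrow> z \<in> carrier G \<Longrightarrow> inv x \<otimes> (x \<otimes> z) = z"
  by (simp add: m_assoc[symmetric])

lemma mult_inv_cancel_left [simp]:
  "x \<in> carrier G \<Longrightarrow> z \<in> carrier G \<Longrightarrow> x \<otimes> (inv x \<otimes> z) = z"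
  by (simp add: m_assoc[symmetric])

lemma gamma2_subgroup: "subgroup (gamma2 G) G"
  unfolding gamma2_def by (rule derived_is_subgroup) simp

lemma commutator_closed [simp]:
  "a \<in> carrier G \<Longrightarrow> b \<in> carrier G \<Longrightarrow> commutator G a b \<in> carrier G"
  unfolding commutator_def by simp

lemma commutator_in_gamma2:
  "a \<in> carrier G \<Longrightarrow> b \<in> carrier G \<Longrightarrow> commutator G a b \<in> gamma2 G"
  unfolding commutator_def gamma2_def derived_def by (rule generate.incl) blast

lemma commutator_one_left: "h \<in> carrier G \<Longrightarrow> commutator G \<one> h = \<one>"
  unfolding commutator_def by simp

lemma mult_eq_commutator_mult:
  "a \<in> carrier G \<Longrightarrow> h \<in> carrier G \<Longrightarrow> a \<otimes> h = commutator G a h \<otimes> (h \<otimes> a)"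
  unfolding commutator_def by (simp add: m_assoc)

lemma commutator_eqI:
  assumes a: "a \<in> carrier G" and h: "h \<in> carrier G" and c: "c \<in> carrier G"
    and eq: "a \<otimes> h = c \<otimes> (h \<otimes> a)"
  shows "commutator G a h = c"
  using mult_eq_commutator_mult[OF a h] eq a h c
  by (metis commutator_closed m_closed r_cancel)

end

locale class2_group = group G for G (structure) +
  assumes gamma3_trivial: "gamma3 G = {\<one>}"
begin

lemma gamma2_central:
  assumes z: "z \<in> gamma2 G" and g: "g \<in> carrier G"
  shows "z \<otimes> g = g \<otimes> z"
proof -
  have zc: "z \<in> carrier G" using subgroup.mem_carrier[OF gamma2_subgroup z] .
  have "z \<otimes> g \<otimes> inv z \<otimes> inv g \<in> gamma3 G" unfolding gamma3_def
    by (rule generate.incl) (use z g in blast)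
  then have "commutator G z g = \<one>" using gamma3_trivial by (simp add: commutator_def)
  then show ?thesis using mult_eq_commutator_mult[OF zc g] zc g by simp
qed

lemma mult_gamma2_mult:
  assumes "c \<in> carrier G" "a \<in> carrier G" "c' \<in> gamma2 G" "b \<in> carrier G"
  shows "(c \<otimes> a) \<otimes> (c' \<otimes> b) = (c \<otimes> c') \<otimes> (a \<otimes> b)"
proof -
  have c': "c' \<in> carrier G" using subgroup.mem_carrier[OF gamma2_subgroup assms(3)] .
  have "(c \<otimes> a) \<otimes> (c' \<otimes> b) = c \<otimes> (a \<otimes> c') \<otimes> b" using assms c' by (simp add: m_assoc)
  also have "\<dots> = c \<otimes> (c' \<otimes> a) \<otimes> b" using gamma2_central[OF assms(3,2)] by simp
  also have "\<dots> = (c \<otimes> c') \<otimes> (a \<otimes> b)" using assms c' by (simp add: m_assoc)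
  finally show ?thesis .
qed

lemma mult_mult_rearrange:
  assumes a: "a \<in> carrier G" and s: "s \<in> carrier G" and b: "b \<in> carrier G" and t: "t \<in> carrier G"
  shows "(a \<otimes> s) \<otimes> (b \<otimes> t) = commutator G s b \<otimes> (a \<otimes> b) \<otimes> (s \<otimes> t)"
proof -
  let ?k = "commutator G s b"
  have k: "?k \<in> gamma2 G" "?k \<in> carrier G" using commutator_in_gamma2[OF s b] s b by simp_all
  have "(a \<otimes> s) \<otimes> (b \<otimes> t) = a \<otimes> (s \<otimes> b) \<otimes> t" using assms by (simp add: m_assoc)
  also have "\<dots> = (a \<otimes> ?k) \<otimes> (b \<otimes> s) \<otimes> t"
    using mult_eq_commutator_mult[OF s b] assms k by (simp add: m_assoc)
  also have "\<dots> = ?k \<otimes> (a \<otimes> b) \<otimes> (s \<otimes> t)"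
    using gamma2_central[OF k(1) a] assms k by (simp add: m_assoc[symmetric])
  finally show ?thesis .
qed

lemma commutator_mult_left:
  assumes a: "a \<in> carrier G" and a': "a' \<in> carrier G" and h: "h \<in> carrier G"
  shows "commutator G (a \<otimes> a') h = commutator G a h \<otimes> commutator G a' h"
proof (rule commutator_eqI)
  let ?c = "commutator G a h" and ?c' = "commutator G a' h"
  have "a \<otimes> a' \<otimes> h = a \<otimes> (?c' \<otimes> (h \<otimes> a'))"
    using mult_eq_commutator_mult[OF a' h] a a' h by (simp add: m_assoc)
  also have "\<dots> = ?c' \<otimes> (a \<otimes> h) \<otimes> a'"
    using gamma2_central[OF commutator_in_gamma2[OF a' h] a] a a' h by (simp add: m_assoc[symmetric])
  also have "\<dots> = ?c' \<otimes> (?c \<otimes> (h \<otimes> a)) \<otimes> a'"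
    using mult_eq_commutator_mult[OF a h] by simp
  also have "\<dots> = (?c \<otimes> ?c') \<otimes> (h \<otimes> (a \<otimes> a'))"
    using gamma2_central[OF commutator_in_gamma2[OF a h], of ?c'] a a' h by (simp add: m_assoc)
  finally show "a \<otimes> a' \<otimes> h = ?c \<otimes> ?c' \<otimes> (h \<otimes> (a \<otimes> a'))" .
qed (use a a' h in auto)

lemma commutator_mult_right:
  assumes a: "a \<in> carrier G" and h: "h \<in> carrier G" and h': "h' \<in> carrier G"
  shows "commutator G a (h \<otimes> h') = commutator G a h \<otimes> commutator G a h'"
proof (rule commutator_eqI)
  let ?c = "commutator G a h" and ?c' = "commutator G a h'"
  have "a \<otimes> (h \<otimes> h') = (?c \<otimes> (h \<otimes> a)) \<otimes> h'"
    using mult_eq_commutator_mult[OF a h] a h h' by (simp add: m_assoc[symmetric])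
  also have "\<dots> = ?c \<otimes> (h \<otimes> (?c' \<otimes> (h' \<otimes> a)))"
    using mult_eq_commutator_mult[OF a h'] a h h' by (simp add: m_assoc)
  also have "\<dots> = ?c \<otimes> (?c' \<otimes> h \<otimes> (h' \<otimes> a))"
    using gamma2_central[OF commutator_in_gamma2[OF a h'] h] a h h' by (simp add: m_assoc)
  also have "\<dots> = (?c \<otimes> ?c') \<otimes> (h \<otimes> h' \<otimes> a)" using a h h' by (simp add: m_assoc)
  finally show "a \<otimes> (h \<otimes> h') = ?c \<otimes> ?c' \<otimes> (h \<otimes> h' \<otimes> a)" .
qed (use a h h' in auto)

lemma zmod_hom_commutator_left:
  assumes \<phi>: "zmod_hom G p (gamma2 G) \<phi>" and h: "h \<in> carrier G"
  shows "zmod_hom G p (carrier G) (\<lambda>a. \<phi> (commutator G a h))"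
  using \<phi> commutator_mult_left commutator_in_gamma2 h unfolding zmod_hom_def by simp

lemma zmod_hom_commutator_right:
  assumes \<phi>: "zmod_hom G p (gamma2 G) \<phi>" and a: "a \<in> carrier G"
  shows "zmod_hom G p (carrier G) (\<lambda>h. \<phi> (commutator G a h))"
  using \<phi> commutator_mult_right commutator_in_gamma2 a unfolding zmod_hom_def by simp

end

section \<open>Monomials in the generators\<close>

primrec monomial :: "('g, 'b) monoid_scheme \<Rightarrow> (nat \<Rightarrow> 'g) \<Rightarrow> nat list \<Rightarrow> (nat \<Rightarrow> int) \<Rightarrow> 'g" where
  "monomial G y [] x = \<one>\<^bsub>G\<^esub>"
| "monomial G y (i # L) x = y i [^]\<^bsub>G\<^esub> nat (x i) \<otimes>\<^bsub>G\<^esub> monomial G y L x"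

definition lower_form :: "nat \<Rightarrow> (nat \<Rightarrow> nat \<Rightarrow> int) \<Rightarrow> (nat \<Rightarrow> int) \<Rightarrow> nat \<Rightarrow> int" where
  "lower_form d w x k = (\<Sum>j\<in>{k<..d}. x j * w j k)"

lemma lower_form_add_mod:
  "lower_form d w (\<lambda>j. (a j + b j) mod (P::int)) k mod P = (lower_form d w a k + lower_form d w b k) mod P"
proof -
  have "lower_form d w (\<lambda>j. (a j + b j) mod P) k mod P
      = (\<Sum>j\<in>{k<..d}. ((a j + b j) mod P * w j k) mod P) mod P"
    unfolding lower_form_def by (simp add: mod_sum_eq)
  also have "\<dots> = (\<Sum>j\<in>{k<..d}. ((a j + b j) * w j k) mod P) mod P"
    by (simp add: mod_mult_left_eq)
  also have "\<dots> = (lower_form d w a k + lower_form d w b k) mod P"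
    unfolding lower_form_def by (simp add: mod_sum_eq sum.distrib distrib_right)
  finally show ?thesis .
qed

lemma sum_neg_mod_mult_mod:
  "(\<Sum>i\<in>I. ((- f i) mod (P::int)) * e i) mod P = (- (\<Sum>i\<in>I. e i * f i)) mod P"
proof -
  have "(\<Sum>i\<in>I. ((- f i) mod P) * e i) mod P = (\<Sum>i\<in>I. (((- f i) mod P) * e i) mod P) mod P"
    by (simp add: mod_sum_eq)
  also have "\<dots> = (\<Sum>i\<in>I. ((- f i) * e i) mod P) mod P"
    by (simp add: mod_mult_left_eq)
  also have "\<dots> = (\<Sum>i\<in>I. (- f i) * e i) mod P"
    by (simp add: mod_sum_eq)
  also have "\<dots> = (- (\<Sum>i\<in>I. e i * f i)) mod P"
    by (simp add: sum_negf[symmetric] algebra_simps)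
  finally show ?thesis .
qed

locale class2_dual_basis = class2_group G for G (structure) +
  fixes p d :: nat and y :: "nat \<Rightarrow> 'a" and \<delta> :: "nat \<Rightarrow> 'a \<Rightarrow> int"
  assumes prime: "Factorial_Ring.prime p"
    and exponent: "\<forall>x\<in>carrier G. x [^] p = \<one>"
    and generators_closed: "y ` {1..d} \<subseteq> carrier G"
    and generate_generators: "generate G (y ` {1..d}) = carrier G"
    and delta_zmod_hom: "j \<in> {1..d} \<Longrightarrow> zmod_hom G p (carrier G) (\<delta> j)"
    and delta_generator: "j \<in> {1..d} \<Longrightarrow> i \<in> {1..d} \<Longrightarrow> \<delta> j (y i) = (if i = j then 1 else 0)"
begin

abbreviation mon :: "nat list \<Rightarrow> (nat \<Rightarrow> int) \<Rightarrow> 'a" where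
  "mon \<equiv> monomial G y"

definition commutator_values :: "('a \<Rightarrow> int) \<Rightarrow> nat \<Rightarrow> nat \<Rightarrow> int" where
  "commutator_values \<phi> j k = \<phi> (commutator G (y j) (y k))"

lemma prime_gt_1: "int p > 1"
  using prime prime_gt_1_nat by simp

lemma generator_closed: "i \<in> {1..d} \<Longrightarrow> y i \<in> carrier G"
  using generators_closed by auto

lemma nat_pow_mod_exponent:
  assumes g: "g \<in> carrier G"
  shows "g [^] (n::nat) = g [^] (n mod p)"
proof -
  have "g [^] n = g [^] (p * (n div p)) \<otimes> g [^] (n mod p)"
    using g by (simp add: nat_pow_mult)
  also have "\<dots> = (g [^] p) [^] (n div p) \<otimes> g [^] (n mod p)"
    using g by (simp add: nat_pow_pow)
  also have "\<dots> = g [^] (n mod p)"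
    using exponent g by simp
  finally show ?thesis .
qed

lemma monomial_closed: "set L \<subseteq> {1..d} \<Longrightarrow> mon L x \<in> carrier G"
  by (induction L) (auto simp: generator_closed)

lemma monomial_cong: "\<forall>i\<in>set L. x i = x' i \<Longrightarrow> mon L x = mon L x'"
  by (induction L) auto

lemma monomial_eq_one: "set L \<subseteq> {1..d} \<Longrightarrow> \<forall>i\<in>set L. x i = 0 \<Longrightarrow> mon L x = \<one>"
  by (induction L) (auto simp: generator_closed monomial_closed)

lemma monomial_unit_vector:
  assumes "distinct L" "set L \<subseteq> {1..d}" "i \<in> set L" "m \<ge> 0"
  shows "mon L (\<lambda>j. if j = i then m else 0) = y i [^] nat m"
  using assms
proof (induction L)
  case (Cons k L)
  show ?case
  proof (cases "k = i")
    case True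
    then have "mon L (\<lambda>j. if j = i then m else 0) = \<one>"
      using Cons by (intro monomial_eq_one) auto
    then show ?thesis using True Cons generator_closed by simp
  next
    case False
    have "y i \<in> carrier G" using Cons generator_closed by auto
    then show ?thesis using False Cons by (simp add: int_pow_closed)
  qed
qed simp

lemma delta_monomial:
  assumes j: "j \<in> {1..d}" and L: "distinct L" "set L \<subseteq> {1..d}"
    and x: "\<forall>i\<in>set L. 0 \<le> x i \<and> x i < int p"
  shows "\<delta> j (mon L x) = (if j \<in> set L then x j else 0)"
  using L x
proof (induction L)
  case Nil
  then show ?case using zmod_hom_one[OF delta_zmod_hom[OF j] subgroup_self] by simp
next
  case (Cons i L)
  have i: "i \<in> {1..d}" using Cons by auto
  have "\<delta> j (y i [^] nat (x i)) = (int (nat (x i)) * \<delta> j (y i)) mod int p"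
    by (rule zmod_hom_nat_pow[OF delta_zmod_hom[OF j] subgroup_self generator_closed[OF i]])
  also have "int (nat (x i)) = x i" using Cons by simp
  finally have "\<delta> j (y i [^] nat (x i)) = (x i * \<delta> j (y i)) mod int p" .
  then have "\<delta> j (mon (i # L) x) = ((x i * \<delta> j (y i)) mod int p + \<delta> j (mon L x)) mod int p"
    using delta_zmod_hom[OF j] monomial_closed[of L x] generator_closed[OF i] Cons
    unfolding zmod_hom_def by simp
  then show ?case using Cons delta_generator[OF j i] by auto
qed

lemma zmod_hom_commutator_monomial:
  assumes \<phi>: "zmod_hom G p (gamma2 G) \<phi>" and h: "h \<in> carrier G"
    and L: "distinct L" "set L \<subseteq> {1..d}" and x: "\<forall>i\<in>set L. 0 \<le> x i"
  shows "\<phi> (commutator G (mon L x) h) = (\<Sum>j\<in>set L. x j * \<phi> (commutator G (y j) h)) mod int p"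
  using L x
proof (induction L)
  case Nil
  then show ?case
    using zmod_hom_one[OF \<phi> gamma2_subgroup] commutator_one_left[OF h] by simp
next
  case (Cons i L)
  let ?\<psi> = "\<lambda>a. \<phi> (commutator G a h)"
  have i: "i \<in> {1..d}" using Cons by auto
  have \<psi>: "zmod_hom G p (carrier G) ?\<psi>" using zmod_hom_commutator_left[OF \<phi> h] .
  have "?\<psi> (mon (i # L) x) = (?\<psi> (y i [^] nat (x i)) + ?\<psi> (mon L x)) mod int p"
    using \<psi> monomial_closed[of L x] generator_closed[OF i] Cons unfolding zmod_hom_def by simp
  also have "?\<psi> (y i [^] nat (x i)) = (int (nat (x i)) * ?\<psi> (y i)) mod int p"
    by (rule zmod_hom_nat_pow[OF \<psi> subgroup_self generator_closed[OF i]])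
  also have "int (nat (x i)) = x i" using Cons by simp
  finally show ?case using Cons by (simp add: mod_add_eq)
qed

lemma monomial_mult:
  assumes \<phi>: "zmod_hom G p (gamma2 G) \<phi>"
    and x: "\<forall>k\<in>{1..d}. 0 \<le> x k" and u: "\<forall>k\<in>{1..d}. 0 \<le> u k" and i: "1 \<le> i"
  shows "\<exists>c\<in>gamma2 G.
           mon [i..<Suc d] x \<otimes> mon [i..<Suc d] u = c \<otimes> mon [i..<Suc d] (\<lambda>k. (x k + u k) mod int p)
         \<and> \<phi> c = (\<Sum>k\<in>{i..d}. u k * lower_form d (commutator_values \<phi>) x k) mod int p"
  using i
proof (induction "Suc d - i" arbitrary: i)
  case 0
  then have "[i..<Suc d] = []" "{i..d} = {}" by auto
  then show ?case
    using zmod_hom_one[OF \<phi> gamma2_subgroup] subgroup.one_closed[OF gamma2_subgroup]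
    by (intro bexI[of _ \<one>]) auto
next
  case (Suc n)
  define z where "z = (\<lambda>k. (x k + u k) mod int p)"
  let ?w = "commutator_values \<phi>"
  have i: "i \<in> {1..d}" using Suc by auto
  have split: "[i..<Suc d] = i # [Suc i..<Suc d]" using i by (simp add: upt_conv_Cons)
  have tail: "distinct [Suc i..<Suc d]" "set [Suc i..<Suc d] \<subseteq> {1..d}" by auto
  obtain c' where c': "c' \<in> gamma2 G"
      "mon [Suc i..<Suc d] x \<otimes> mon [Suc i..<Suc d] u = c' \<otimes> mon [Suc i..<Suc d] z"
      "\<phi> c' = (\<Sum>k\<in>{Suc i..d}. u k * lower_form d ?w x k) mod int p"
  proof -
    have "n = Suc d - Suc i" using Suc.hyps(2) by arith
    from Suc.hyps(1)[OF this] show ?thesis using that unfolding z_def by auto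
  qed
  let ?Y = "y i" and ?a = "nat (x i)" and ?b = "nat (u i)"
  let ?S = "mon [Suc i..<Suc d] x" and ?T = "mon [Suc i..<Suc d] u" and ?Z = "mon [Suc i..<Suc d] z"
  let ?k = "commutator G ?S (?Y [^] ?b)"
  have Y: "?Y \<in> carrier G" using generator_closed[OF i] .
  have STZ: "?S \<in> carrier G" "?T \<in> carrier G" "?Z \<in> carrier G"
    using monomial_closed[OF tail(2)] by auto
  have k: "?k \<in> gamma2 G" "?k \<in> carrier G" using commutator_in_gamma2 STZ Y by simp_all
  have pow_add: "?Y [^] ?a \<otimes> ?Y [^] ?b = ?Y [^] nat (z i)"
  proof -
    have "?Y [^] ?a \<otimes> ?Y [^] ?b = ?Y [^] ((?a + ?b) mod p)"
      using Y nat_pow_mod_exponent[OF Y, of "?a + ?b"] by (simp add: nat_pow_mult del: pow_nat)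
    moreover have "nat (z i) = (?a + ?b) mod p"
      unfolding z_def using x u i by (simp add: nat_mod_distrib nat_add_distrib)
    ultimately show ?thesis by (simp del: pow_nat)
  qed
  have "mon [i..<Suc d] x \<otimes> mon [i..<Suc d] u = (?Y [^] ?a \<otimes> ?S) \<otimes> (?Y [^] ?b \<otimes> ?T)"
    by (simp only: split monomial.simps)
  also have "\<dots> = ?k \<otimes> (?Y [^] ?a \<otimes> ?Y [^] ?b) \<otimes> (?S \<otimes> ?T)"
    by (rule mult_mult_rearrange) (use Y STZ in simp_all)
  also have "\<dots> = (?k \<otimes> ?Y [^] nat (z i)) \<otimes> (c' \<otimes> ?Z)"
    by (simp only: pow_add c'(2))
  also have "\<dots> = (?k \<otimes> c') \<otimes> (?Y [^] nat (z i) \<otimes> ?Z)"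
    by (rule mult_gamma2_mult) (use k Y c' STZ in \<open>simp_all del: pow_nat\<close>)
  also have "\<dots> = (?k \<otimes> c') \<otimes> mon [i..<Suc d] z"
    by (simp only: split monomial.simps)
  finally have eq: "mon [i..<Suc d] x \<otimes> mon [i..<Suc d] u = (?k \<otimes> c') \<otimes> mon [i..<Suc d] z" .
  have "\<phi> ?k = (u i * (lower_form d ?w x i mod int p)) mod int p"
  proof -
    have "\<phi> ?k = (int ?b * \<phi> (commutator G ?S ?Y)) mod int p"
      by (rule zmod_hom_nat_pow[OF zmod_hom_commutator_right[OF \<phi> STZ(1)] subgroup_self Y])
    also have "int ?b = u i" using u i by simp
    also have "\<phi> (commutator G ?S ?Y) = lower_form d ?w x i mod int p"
    proof -
      have "set [Suc i..<Suc d] = {i<..d}" by auto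
      then show ?thesis
        using zmod_hom_commutator_monomial[OF \<phi> Y tail] x
        unfolding lower_form_def commutator_values_def by auto
    qed
    finally show ?thesis .
  qed
  then have "\<phi> (?k \<otimes> c') = (u i * lower_form d ?w x i + (\<Sum>k\<in>{Suc i..d}. u k * lower_form d ?w x k)) mod int p"
    using \<phi> k c' unfolding zmod_hom_def by (simp add: mod_add_eq mod_mult_right_eq)
  also have "\<dots> = (\<Sum>k\<in>{i..d}. u k * lower_form d ?w x k) mod int p"
    using i by (simp add: sum.atLeast_Suc_atMost)
  finally show ?case
    using eq subgroup.m_closed[OF gamma2_subgroup k(1) c'(1)] unfolding z_def by blast
qed

section \<open>The Frattini subgroup is the derived subgroup\<close>

declare upt_Suc [simp del]

abbreviation indices :: "nat list" where
  "indices \<equiv> [1..<Suc d]"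

definition exponent_vectors :: "(nat \<Rightarrow> int) set" where
  "exponent_vectors =
     {x. (\<forall>i\<in>{1..d}. 0 \<le> x i \<and> x i < int p) \<and> (\<forall>i. i \<notin> {1..d} \<longrightarrow> x i = 0)}"

definition exponent_add :: "(nat \<Rightarrow> int) \<Rightarrow> (nat \<Rightarrow> int) \<Rightarrow> nat \<Rightarrow> int" where
  "exponent_add x u k = (if k \<in> {1..d} then (x k + u k) mod int p else 0)"

definition delta_kernel :: "'a set" where
  "delta_kernel = {g \<in> carrier G. \<forall>j\<in>{1..d}. \<delta> j g = 0}"

lemma monomial_indices_closed: "mon indices x \<in> carrier G"
  by (rule monomial_closed) auto

lemma exponent_add_closed: "exponent_add x u \<in> exponent_vectors"
  unfolding exponent_vectors_def exponent_add_def using prime_gt_1 by auto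

lemma unit_exponent_vector:
  "i \<in> {1..d} \<Longrightarrow> 0 \<le> m \<Longrightarrow> m < int p \<Longrightarrow> (\<lambda>j. if j = i then m else 0) \<in> exponent_vectors"
  unfolding exponent_vectors_def by auto

lemma monomial_indices_mult:
  assumes x: "x \<in> exponent_vectors" and u: "u \<in> exponent_vectors"
  shows "\<exists>c\<in>gamma2 G. mon indices x \<otimes> mon indices u = c \<otimes> mon indices (exponent_add x u)"
proof -
  have zero: "zmod_hom G p (gamma2 G) (\<lambda>_. 0)"
    unfolding zmod_hom_def using prime_gt_1 by auto
  obtain c where "c \<in> gamma2 G"
      "mon indices x \<otimes> mon indices u = c \<otimes> mon indices (\<lambda>k. (x k + u k) mod int p)"
    using monomial_mult[OF zero, of x u 1] x u unfolding exponent_vectors_def by auto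
  moreover have "mon indices (\<lambda>k. (x k + u k) mod int p) = mon indices (exponent_add x u)"
    by (rule monomial_cong) (auto simp: exponent_add_def)
  ultimately show ?thesis by auto
qed

lemma generator_inv:
  assumes i: "i \<in> {1..d}"
  shows "inv (y i) = y i [^] (p - 1)"
proof (rule inv_equality)
  have "y i [^] (p - 1) \<otimes> y i = y i [^] p"
    using prime_gt_1 by (metis Suc_diff_1 nat_pow_Suc of_nat_0_less_iff order.strict_trans zero_less_one)
  then show "y i [^] (p - 1) \<otimes> y i = \<one>" using exponent generator_closed[OF i] by simp
qed (use generator_closed[OF i] in simp_all)

lemma gamma2_monomial_decomposition:
  assumes g: "g \<in> carrier G"
  shows "\<exists>c\<in>gamma2 G. \<exists>x\<in>exponent_vectors. g = c \<otimes> mon indices x"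
proof -
  have one_gamma2: "\<one> \<in> gamma2 G" using subgroup.one_closed[OF gamma2_subgroup] .
  have power: "\<exists>c\<in>gamma2 G. \<exists>x\<in>exponent_vectors. y i [^] m = c \<otimes> mon indices x"
    if i: "i \<in> {1..d}" and m: "m < p" for i m
  proof -
    have "mon indices (\<lambda>j. if j = i then int m else 0) = y i [^] nat (int m)"
      by (rule monomial_unit_vector) (use i in auto)
    moreover have "(\<lambda>j. if j = i then int m else 0) \<in> exponent_vectors"
      using unit_exponent_vector[OF i] m by simp
    ultimately show ?thesis using one_gamma2 generator_closed[OF i] by force
  qed
  from g generate_generators have "g \<in> generate G (y ` {1..d})" by simp
  then show ?thesis
  proof (induction rule: generate.induct)
    case one
    have "(\<lambda>_. 0) \<in> exponent_vectors" "mon indices (\<lambda>_. 0) = \<one>"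
      using prime_gt_1 by (auto simp: exponent_vectors_def intro: monomial_eq_one)
    then show ?case using one_gamma2 by force
  next
    case (incl h)
    then obtain i where "i \<in> {1..d}" "h = y i" by auto
    then show ?case using power[of i 1] prime_gt_1 generator_closed by force
  next
    case (inv h)
    then obtain i where "i \<in> {1..d}" "h = y i" by auto
    then show ?case using power[of i "p - 1"] generator_inv prime_gt_1 by force
  next
    case (eng g1 g2)
    obtain c1 x1 where 1: "c1 \<in> gamma2 G" "x1 \<in> exponent_vectors" "g1 = c1 \<otimes> mon indices x1"
      using eng.IH(1) by blast
    obtain c2 x2 where 2: "c2 \<in> gamma2 G" "x2 \<in> exponent_vectors" "g2 = c2 \<otimes> mon indices x2"
      using eng.IH(2) by blast
    obtain c where c: "c \<in> gamma2 G"
        "mon indices x1 \<otimes> mon indices x2 = c \<otimes> mon indices (exponent_add x1 x2)"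
      using monomial_indices_mult[OF 1(2) 2(2)] by blast
    have carrier: "c1 \<in> carrier G" "c2 \<in> carrier G" "c \<in> carrier G"
      using subgroup.mem_carrier[OF gamma2_subgroup] 1 2 c by auto
    have "g1 \<otimes> g2 = (c1 \<otimes> c2) \<otimes> (mon indices x1 \<otimes> mon indices x2)"
      unfolding 1(3) 2(3) by (rule mult_gamma2_mult) (use 2 carrier monomial_indices_closed in auto)
    also have "\<dots> = (c1 \<otimes> c2 \<otimes> c) \<otimes> mon indices (exponent_add x1 x2)"
      using c(2) carrier monomial_indices_closed[of "exponent_add x1 x2"] by (simp add: m_assoc)
    finally show ?case
      using subgroup.m_closed[OF gamma2_subgroup] 1 2 c exponent_add_closed by blast
  qed
qed

lemma delta_kernel_subgroup: "subgroup delta_kernel G"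
proof (rule subgroupI)
  show "delta_kernel \<subseteq> carrier G" unfolding delta_kernel_def by auto
  show "delta_kernel \<noteq> {}"
    unfolding delta_kernel_def using zmod_hom_one[OF delta_zmod_hom subgroup_self] by auto
  fix a b assume a: "a \<in> delta_kernel" and b: "b \<in> delta_kernel"
  show "inv a \<in> delta_kernel"
    using a zmod_hom_inv[OF delta_zmod_hom subgroup_self] unfolding delta_kernel_def by auto
  show "a \<otimes> b \<in> delta_kernel"
    using a b delta_zmod_hom unfolding delta_kernel_def zmod_hom_def by auto
qed

lemma delta_commutator:
  assumes j: "j \<in> {1..d}" and a: "a \<in> carrier G" and b: "b \<in> carrier G"
  shows "\<delta> j (commutator G a b) = 0"
proof -
  have hom: "\<forall>g\<in>carrier G. \<forall>h\<in>carrier G. \<delta> j (g \<otimes> h) = (\<delta> j g + \<delta> j h) mod int p"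
    using delta_zmod_hom[OF j] unfolding zmod_hom_def by blast
  have "\<delta> j (commutator G a b) = ((((\<delta> j a + \<delta> j b) mod int p + (- \<delta> j a) mod int p) mod int p)
                                   + (- \<delta> j b) mod int p) mod int p"
    using hom a b zmod_hom_inv[OF delta_zmod_hom[OF j] subgroup_self] unfolding commutator_def by simp
  also have "\<dots> = 0"
    by (simp add: mod_add_left_eq mod_add_right_eq mod_diff_left_eq mod_diff_right_eq)
  finally show ?thesis .
qed

lemma gamma2_subset_delta_kernel: "gamma2 G \<subseteq> delta_kernel"
  unfolding gamma2_def derived_def
proof (rule generate_subgroup_incl[OF _ delta_kernel_subgroup])
  show "derived_set G (carrier G) \<subseteq> delta_kernel"
    using delta_commutator unfolding delta_kernel_def commutator_def by auto
qed

lemma delta_kernel_mult: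
  assumes n: "n \<in> delta_kernel" and g: "g \<in> carrier G" and j: "j \<in> {1..d}"
  shows "\<delta> j (n \<otimes> g) = \<delta> j g"
  using n g delta_zmod_hom[OF j] j unfolding delta_kernel_def zmod_hom_def by auto

lemma delta_monomial_indices:
  assumes x: "x \<in> exponent_vectors" and j: "j \<in> {1..d}"
  shows "\<delta> j (mon indices x) = x j"
proof -
  have "\<delta> j (mon indices x) = (if j \<in> set indices then x j else 0)"
    by (rule delta_monomial[OF j]) (use x in \<open>auto simp: exponent_vectors_def\<close>)
  then show ?thesis using j by simp
qed

lemma delta_kernel_subset_gamma2: "delta_kernel \<subseteq> gamma2 G"
proof
  fix n assume n: "n \<in> delta_kernel"
  then obtain c x where c: "c \<in> gamma2 G" and x: "x \<in> exponent_vectors" and n_eq: "n = c \<otimes> mon indices x"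
    using gamma2_monomial_decomposition unfolding delta_kernel_def by blast
  have "x j = 0" if j: "j \<in> {1..d}" for j
  proof -
    have "x j = \<delta> j (c \<otimes> mon indices x)"
      using delta_kernel_mult[OF subsetD[OF gamma2_subset_delta_kernel c] monomial_indices_closed j]
        delta_monomial_indices[OF x j] by simp
    then show ?thesis using n j n_eq unfolding delta_kernel_def by simp
  qed
  then have "mon indices x = \<one>" by (intro monomial_eq_one) auto
  then show "n \<in> gamma2 G"
    using c n_eq subgroup.mem_carrier[OF gamma2_subgroup c] by simp
qed

lemma frattini_subset_delta_kernel: "frattini G \<subseteq> delta_kernel"
  using zmod_hom_vanishes_on_frattini[OF prime delta_zmod_hom] subgroup.subset[OF frattini_subgroup]
  unfolding delta_kernel_def by auto

lemma card_exponent_vectors: "card exponent_vectors = p ^ d"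
proof -
  let ?P = "PiE {1..d} (\<lambda>_. {0..<int p})"
  have "exponent_vectors = (\<lambda>f i. if i \<in> {1..d} then f i else 0) ` ?P"
  proof
    show "exponent_vectors \<subseteq> (\<lambda>f i. if i \<in> {1..d} then f i else 0) ` ?P"
    proof
      fix x assume x: "x \<in> exponent_vectors"
      then have "restrict x {1..d} \<in> ?P" "x = (\<lambda>i. if i \<in> {1..d} then restrict x {1..d} i else 0)"
        unfolding exponent_vectors_def by auto
      then show "x \<in> (\<lambda>f i. if i \<in> {1..d} then f i else 0) ` ?P" by blast
    qed
  qed (auto simp: exponent_vectors_def PiE_def)
  moreover have "inj_on (\<lambda>f i. if i \<in> {1..d} then f i else (0::int)) ?P"
  proof (rule inj_onI)
    fix f g assume f: "f \<in> ?P" and g: "g \<in> ?P"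
      and eq: "(\<lambda>i. if i \<in> {1..d} then f i else 0) = (\<lambda>i. if i \<in> {1..d} then g i else 0)"
    show "f = g"
    proof
      fix i show "f i = g i"
        using f g fun_cong[OF eq, of i] by (cases "i \<in> {1..d}") (auto simp: PiE_def extensional_def)
    qed
  qed
  ultimately show ?thesis by (simp add: card_image card_PiE)
qed


lemma card_rcosets_delta_kernel:
  assumes fin: "finite (carrier G)"
  shows "p ^ d \<le> card (rcosets delta_kernel)"
proof -
  have inj: "inj_on (\<lambda>x. delta_kernel #> mon indices x) exponent_vectors"
  proof (rule inj_onI)
    fix x x' assume x: "x \<in> exponent_vectors" and x': "x' \<in> exponent_vectors"
      and eq: "delta_kernel #> mon indices x = delta_kernel #> mon indices x'"
    have "mon indices x \<in> delta_kernel #> mon indices x'"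
      using eq monomial_indices_closed rcos_self[OF _ delta_kernel_subgroup] by blast
    then obtain n where n: "n \<in> delta_kernel" "mon indices x = n \<otimes> mon indices x'"
      unfolding r_coset_def by blast
    show "x = x'"
    proof
      fix j show "x j = x' j"
      proof (cases "j \<in> {1..d}")
        case True
        then show ?thesis
          using n delta_kernel_mult[OF n(1) monomial_indices_closed True]
            delta_monomial_indices[OF x True] delta_monomial_indices[OF x' True] by simp
      next
        case False
        then show ?thesis using x x' unfolding exponent_vectors_def by auto
      qed
    qed
  qed
  have "(\<lambda>x. delta_kernel #> mon indices x) ` exponent_vectors \<subseteq> rcosets delta_kernel"
    unfolding RCOSETS_def using monomial_indices_closed by blast
  moreover have "finite (rcosets delta_kernel)"
    unfolding RCOSETS_def using fin by simp
  ultimately show ?thesis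
    using card_inj_on_le[OF inj] card_exponent_vectors by simp
qed

lemma frattini_eq_gamma2:
  assumes fin: "finite (carrier G)" and index: "card (rcosets (frattini G)) = p ^ d"
  shows "frattini G = gamma2 G"
proof -
  have "card (rcosets (frattini G)) * card (frattini G) = card (rcosets delta_kernel) * card delta_kernel"
    using lagrange[OF frattini_subgroup] lagrange[OF delta_kernel_subgroup] by simp
  moreover have "p ^ d \<le> card (rcosets delta_kernel)" using card_rcosets_delta_kernel[OF fin] .
  ultimately have "p ^ d * card delta_kernel \<le> p ^ d * card (frattini G)"
    using index by (metis mult.commute mult_le_mono1)
  then have "card delta_kernel \<le> card (frattini G)" using prime_gt_1 by simp
  moreover have "finite delta_kernel" using fin unfolding delta_kernel_def by simp
  ultimately have "frattini G = delta_kernel"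
    using frattini_subset_delta_kernel by (simp add: card_seteq)
  then show ?thesis
    using gamma2_subset_delta_kernel delta_kernel_subset_gamma2 by blast
qed

section \<open>Extending homomorphisms on the derived subgroup to derivations\<close>

definition gamma2_part :: "'a \<Rightarrow> 'a" where
  "gamma2_part g = g \<otimes> inv (mon indices (\<lambda>j. \<delta> j g))"

definition twist :: "('a \<Rightarrow> int) \<Rightarrow> 'a \<Rightarrow> nat \<Rightarrow> int" where
  "twist \<phi> g = lower_form d (commutator_values \<phi>) (\<lambda>j. \<delta> j g)"

definition extension :: "('a \<Rightarrow> int) \<Rightarrow> 'a \<Rightarrow> int \<times> (nat \<Rightarrow> int)" where
  "extension \<phi> g = (\<phi> (gamma2_part g), \<lambda>i. if i \<in> {1..d} then (- twist \<phi> g i) mod int p else 0)"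

lemma gamma2_part:
  assumes g: "g \<in> carrier G"
  shows "gamma2_part g \<in> gamma2 G" and "g = gamma2_part g \<otimes> mon indices (\<lambda>j. \<delta> j g)"
proof -
  obtain c x where c: "c \<in> gamma2 G" and x: "x \<in> exponent_vectors" and g_eq: "g = c \<otimes> mon indices x"
    using gamma2_monomial_decomposition[OF g] by blast
  have c_carrier: "c \<in> carrier G" using subgroup.mem_carrier[OF gamma2_subgroup c] .
  have "x j = \<delta> j g" if "j \<in> set indices" for j
    using that g_eq delta_kernel_mult[OF subsetD[OF gamma2_subset_delta_kernel c] monomial_indices_closed]
      delta_monomial_indices[OF x] by simp
  then have "mon indices x = mon indices (\<lambda>j. \<delta> j g)" by (rule monomial_cong[rule_format])
  then have "g = c \<otimes> mon indices (\<lambda>j. \<delta> j g)" and "gamma2_part g = c"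
    using g_eq c_carrier monomial_indices_closed by (simp_all add: gamma2_part_def m_assoc)
  then show "gamma2_part g \<in> gamma2 G" "g = gamma2_part g \<otimes> mon indices (\<lambda>j. \<delta> j g)"
    using c by simp_all
qed

lemma gamma2_part_gamma2:
  assumes c: "c \<in> gamma2 G"
  shows "gamma2_part c = c"
proof -
  have "\<forall>j\<in>{1..d}. \<delta> j c = 0"
    using gamma2_subset_delta_kernel c unfolding delta_kernel_def by auto
  then have "mon indices (\<lambda>j. \<delta> j c) = \<one>" by (intro monomial_eq_one) auto
  then show ?thesis using subgroup.mem_carrier[OF gamma2_subgroup c] by (simp add: gamma2_part_def)
qed

lemma delta_mult:
  "j \<in> {1..d} \<Longrightarrow> g \<in> carrier G \<Longrightarrow> h \<in> carrier G \<Longrightarrow> \<delta> j (g \<otimes> h) = (\<delta> j g + \<delta> j h) mod int p"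
  using delta_zmod_hom unfolding zmod_hom_def by blast

lemma zmod_hom_gamma2_part_mult:
  assumes \<phi>: "zmod_hom G p (gamma2 G) \<phi>" and g: "g \<in> carrier G" and h: "h \<in> carrier G"
  shows "\<phi> (gamma2_part (g \<otimes> h))
           = (\<phi> (gamma2_part g) + \<phi> (gamma2_part h) + (\<Sum>k\<in>{1..d}. \<delta> k h * twist \<phi> g k)) mod int p"
proof -
  let ?m = "\<lambda>g. mon indices (\<lambda>j. \<delta> j g)"
  have gh: "g \<otimes> h \<in> carrier G" using g h by simp
  have A: "gamma2_part g \<in> gamma2 G" "gamma2_part h \<in> gamma2 G" "gamma2_part (g \<otimes> h) \<in> gamma2 G"
    using gamma2_part(1) g h gh by blast+
  have A_carrier: "gamma2_part g \<in> carrier G" "gamma2_part h \<in> carrier G" "gamma2_part (g \<otimes> h) \<in> carrier G"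
    using A subgroup.mem_carrier[OF gamma2_subgroup] by blast+
  have m_carrier: "?m g \<in> carrier G" "?m h \<in> carrier G" "?m (g \<otimes> h) \<in> carrier G"
    using monomial_indices_closed by blast+
  obtain c where c: "c \<in> gamma2 G"
      "?m g \<otimes> ?m h = c \<otimes> mon indices (\<lambda>k. (\<delta> k g + \<delta> k h) mod int p)"
      "\<phi> c = (\<Sum>k\<in>{1..d}. \<delta> k h * twist \<phi> g k) mod int p"
    using monomial_mult[OF \<phi>, of "\<lambda>j. \<delta> j g" "\<lambda>j. \<delta> j h" 1] delta_zmod_hom g h
    unfolding twist_def zmod_hom_def by auto
  have c_carrier: "c \<in> carrier G" using subgroup.mem_carrier[OF gamma2_subgroup c(1)] .
  have "mon indices (\<lambda>k. (\<delta> k g + \<delta> k h) mod int p) = ?m (g \<otimes> h)"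
    by (rule monomial_cong) (simp add: delta_mult g h)
  then have "gamma2_part (g \<otimes> h) \<otimes> ?m (g \<otimes> h) = (gamma2_part g \<otimes> gamma2_part h \<otimes> c) \<otimes> ?m (g \<otimes> h)"
    using gamma2_part(2)[OF gh, symmetric] gamma2_part(2)[OF g] gamma2_part(2)[OF h]
      mult_gamma2_mult[OF A_carrier(1) m_carrier(1) A(2) m_carrier(2)] c(2) A_carrier c_carrier m_carrier
    by (simp add: m_assoc)
  then have "gamma2_part (g \<otimes> h) = gamma2_part g \<otimes> gamma2_part h \<otimes> c"
    using A_carrier c_carrier m_carrier by simp
  then show ?thesis
    using \<phi> A c subgroup.m_closed[OF gamma2_subgroup A(1,2)] unfolding zmod_hom_def
    by (simp add: mod_simps)
qed

lemma twist_mult_mod: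
  assumes g: "g \<in> carrier G" and h: "h \<in> carrier G"
  shows "twist \<phi> (g \<otimes> h) k mod int p = (twist \<phi> g k + twist \<phi> h k) mod int p"
proof -
  have "twist \<phi> (g \<otimes> h) k = lower_form d (commutator_values \<phi>) (\<lambda>j. (\<delta> j g + \<delta> j h) mod int p) k"
    unfolding twist_def lower_form_def using g h by (intro sum.cong) (auto simp: delta_mult)
  then show ?thesis by (simp add: lower_form_add_mod twist_def)
qed

lemma extension_derivation:
  assumes \<phi>: "zmod_hom G p (gamma2 G) \<phi>"
  shows "is_derivation G (carrier G) (A_carrier p d) (A_add p d) (A_act p d \<delta>) (extension \<phi>)"
  unfolding is_derivation_def
proof (intro conjI ballI)
  fix g assume g: "g \<in> carrier G"
  show "extension \<phi> g \<in> A_carrier p d"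
    using \<phi> gamma2_part(1)[OF g] prime_gt_1 unfolding extension_def A_carrier_def zmod_hom_def by auto
  fix h assume h: "h \<in> carrier G"
  let ?rhs = "A_add p d (A_act p d \<delta> (extension \<phi> g) h) (extension \<phi> h)"
  have "snd (extension \<phi> (g \<otimes> h)) i = snd ?rhs i" for i
  proof (cases "i \<in> {1..d}")
    case True
    have "(- twist \<phi> (g \<otimes> h) i) mod int p
          = ((- twist \<phi> g i) mod int p + (- twist \<phi> h i) mod int p) mod int p"
      using twist_mult_mod[OF g h, of \<phi> i]
      by (metis (no_types, lifting) add.inverse_distrib_swap add.commute mod_add_eq mod_minus_eq)
    then show ?thesis using True unfolding extension_def A_add_def A_act_def by simp
  next
    case False
    then show ?thesis by (auto simp: extension_def A_add_def A_act_def)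
  qed
  moreover have "fst (extension \<phi> (g \<otimes> h)) = fst ?rhs"
  proof -
    define F where "F = (\<Sum>k\<in>{1..d}. \<delta> k h * twist \<phi> g k)"
    define S where "S = (\<Sum>i\<in>{1..d}. ((- twist \<phi> g i) mod int p) * \<delta> i h)"
    have S: "S mod int p = (- F) mod int p"
      unfolding S_def F_def by (rule sum_neg_mod_mult_mod)
    have "fst ?rhs = ((\<phi> (gamma2_part g) - S) mod int p + \<phi> (gamma2_part h)) mod int p"
      unfolding A_add_def A_act_def extension_def S_def by simp
    also have "\<dots> = (\<phi> (gamma2_part g) + \<phi> (gamma2_part h) - S mod int p) mod int p"
      by (simp add: mod_simps algebra_simps)
    also have "\<dots> = (\<phi> (gamma2_part g) + \<phi> (gamma2_part h) + F) mod int p"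
      unfolding S by (simp add: mod_diff_right_eq)
    finally show ?thesis
      using zmod_hom_gamma2_part_mult[OF \<phi> g h] unfolding extension_def F_def by simp
  qed
  ultimately show "extension \<phi> (g \<otimes> h) = ?rhs" by (simp add: prod_eq_iff fun_eq_iff)
qed

lemma derivation_extend_gamma2:
  assumes \<sigma>: "is_derivation G (gamma2 G) (S_carrier p d) (A_add p d) (\<lambda>u g. u) \<sigma>"
  shows "\<exists>\<tau>. is_derivation G (carrier G) (A_carrier p d) (A_add p d) (A_act p d \<delta>) \<tau>
             \<and> (\<forall>c\<in>gamma2 G. \<tau> c = \<sigma> c)"
proof -
  define \<phi> where "\<phi> = (\<lambda>c. fst (\<sigma> c))"
  have \<phi>: "zmod_hom G p (gamma2 G) \<phi>"
    using \<sigma> unfolding \<phi>_def is_derivation_def zmod_hom_def S_carrier_def A_add_def by auto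
  have "extension \<phi> c = \<sigma> c" if c: "c \<in> gamma2 G" for c
  proof -
    have "\<delta> j c = 0" if "j \<in> {1..d}" for j
      using c that gamma2_subset_delta_kernel unfolding delta_kernel_def by auto
    then have twist_zero: "twist \<phi> c i = 0" for i
      unfolding twist_def lower_form_def by (intro sum.neutral) auto
    have "\<sigma> c \<in> S_carrier p d" using \<sigma> c unfolding is_derivation_def by blast
    then have "snd (\<sigma> c) = (\<lambda>_. 0)" unfolding S_carrier_def by (cases "\<sigma> c") auto
    then show ?thesis
      unfolding extension_def gamma2_part_gamma2[OF c]
      by (simp only: twist_zero) (simp add: prod_eq_iff fun_eq_iff \<phi>_def)
  qed
  then show ?thesis using extension_derivation[OF \<phi>] by blast
qed

end

theorem lemma3p7:
  fixes G (structure) and p d :: nat and y :: "nat \<Rightarrow> 'g" and \<delta> :: "nat \<Rightarrow> 'g \<Rightarrow> int"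
  assumes grp: "group G"
    and p: "Factorial_Ring.prime p" "odd p"
    and d: "d \<ge> 2"
    and fin: "finite (carrier G)"
    and pgrp: "\<exists>n. card (carrier G) = p ^ n"
    and expo: "\<forall>x\<in>carrier G. x [^] p = \<one>"
    and class2: "gamma3 G = {\<one>}" "gamma2 G \<noteq> {\<one>}"
    and gens: "y ` {1..d} \<subseteq> carrier G" "generate G (y ` {1..d}) = carrier G"
    and frat: "card (rcosets (frattini G)) = p ^ d"
    and frat_g3: "card ((\<lambda>x. gamma3 G #> x) ` frattini G) = p ^ (d choose 2)"
    and delta: "\<forall>j\<in>{1..d}. (\<forall>g\<in>carrier G. \<delta> j g \<in> {0..<int p})
                  \<and> (\<forall>g\<in>carrier G. \<forall>h\<in>carrier G. \<delta> j (g \<otimes> h) = (\<delta> j g + \<delta> j h) mod int p)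
                  \<and> (\<forall>i\<in>{1..d}. \<delta> j (y i) = (if i = j then 1 else 0))"
  shows "(\<forall>\<tau>. is_derivation G (carrier G) (A_carrier p d) (A_add p d) (A_act p d \<delta>) \<tau>
              \<longrightarrow> is_derivation G (frattini G) (S_carrier p d) (A_add p d) (\<lambda>u g. u) \<tau>)
       \<and> (\<forall>\<sigma>. is_derivation G (frattini G) (S_carrier p d) (A_add p d) (\<lambda>u g. u) \<sigma>
              \<longrightarrow> (\<exists>\<tau>. is_derivation G (carrier G) (A_carrier p d) (A_add p d) (A_act p d \<delta>) \<tau>
                       \<and> (\<forall>g\<in>frattini G. \<tau> g = \<sigma> g)))"
proof -
  interpret class2_dual_basis G p d y \<delta>
  proof (intro class2_dual_basis.intro class2_group.intro class2_group_axioms.intro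
      class2_dual_basis_axioms.intro grp)
    show "j \<in> {1..d} \<Longrightarrow> zmod_hom G p (carrier G) (\<delta> j)" for j
      using delta unfolding zmod_hom_def by blast
  qed (use p(1) expo class2(1) gens delta in auto)
  have "frattini G = gamma2 G" using frattini_eq_gamma2[OF fin frat] .
  then show ?thesis
    using derivation_restrict_frattini[OF p(1)] derivation_extend_gamma2 by auto
qed

end
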